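(* Let $T_0,T_1,A,B,C\subseteq\mathbb{N}$ with $T_0,T_1$ of total enumeration degree, $T_0<_e A$ and $T_1<_e A$. If $\{A,B\}$ is a nontrivial $\mathcal{K}_{T_0}$-pair and $\{A,C\}$ is a nontrivial $\mathcal{K}_{T_1}$-pair, then $T_0\equiv_e T_1$. In particular, $\{A,B\oplus C\}$ is a nontrivial $\mathcal{K}_{T_0}$-pair.
   Context: Enumeration reducibility: $A\le_e B$ if $A=\Gamma(B):=\{n:\exists D\subseteq B,\ \langle n,D\rangle\in\Gamma\}$ for some c.e. set $\Gamma$ of pairs $\langle n,D\rangle$ with $D$ finite; $A\equiv_e B$ iff $A\le_e B\le_e A$; $A<_e B$ iff $A\le_e B$ and $B\not\le_e A$. A set $T$ has total degree if $T\equiv_e X\oplus(\mathbb{N}\setminus X)$ for some $X$, where $X\oplus Y=\{2n:n\in X\}\cup\{2n+1:n\in Y\}$. $\mathcal{K}_U$-pair: $\{A,B\}$ is a $\mathcal{K}_U$-pair if there is $W\le_e U$ with $\{\langle a,b\rangle: a\in A, b\in B\}\subseteq W$ and $\{\langle a,b\rangle: a\notin A, b\notin B\}\cap W=\varnothing$; it is nontrivial if $A\not\le_e U$ and $B\not\le_e U$. *)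

theory Defs
  imports Main "HOL-Library.Nat_Bijection"
begin

inductive primrec_fn :: "nat \<Rightarrow> (nat list \<Rightarrow> nat) \<Rightarrow> bool" where
  pr_zero: "primrec_fn k (\<lambda>_. 0)"
| pr_succ: "primrec_fn 1 (\<lambda>xs. Suc (hd xs))"
| pr_proj: "i < k \<Longrightarrow> primrec_fn k (\<lambda>xs. xs ! i)"
| pr_comp: "primrec_fn m f \<Longrightarrow> length gs = m \<Longrightarrow> (\<forall>g\<in>set gs. primrec_fn k g)
             \<Longrightarrow> primrec_fn k (\<lambda>xs. f (map (\<lambda>g. g xs) gs))"
| pr_rec: "primrec_fn k f \<Longrightarrow> primrec_fn (Suc (Suc k)) g
             \<Longrightarrow> primrec_fn (Suc k)
                  (\<lambda>xs. rec_nat (f (tl xs)) (\<lambda>y r. g (y # r # tl xs)) (hd xs))"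

definition ce :: "nat set \<Rightarrow> bool" where
  "ce S \<longleftrightarrow> (\<exists>f. primrec_fn 2 f \<and> S = {n. \<exists>m. f [n, m] = 0})"

definition pair :: "nat \<Rightarrow> nat \<Rightarrow> nat" where
  "pair a b = prod_encode (a, b)"

definition fin_code :: "nat set \<Rightarrow> nat" where
  "fin_code D = (\<Sum>x\<in>D. 2 ^ x)"

definition enum_op :: "nat set \<Rightarrow> nat set \<Rightarrow> nat set" where
  "enum_op \<Gamma> B = {n. \<exists>D. finite D \<and> D \<subseteq> B \<and> pair n (fin_code D) \<in> \<Gamma>}"

definition e_le :: "nat set \<Rightarrow> nat set \<Rightarrow> bool" (infix "\<le>\<^sub>e" 50) where
  "A \<le>\<^sub>e B \<longleftrightarrow> (\<exists>\<Gamma>. ce \<Gamma> \<and> A = enum_op \<Gamma> B)"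

definition e_equiv :: "nat set \<Rightarrow> nat set \<Rightarrow> bool" (infix "\<equiv>\<^sub>e" 50) where
  "A \<equiv>\<^sub>e B \<longleftrightarrow> A \<le>\<^sub>e B \<and> B \<le>\<^sub>e A"

definition e_less :: "nat set \<Rightarrow> nat set \<Rightarrow> bool" (infix "<\<^sub>e" 50) where
  "A <\<^sub>e B \<longleftrightarrow> A \<le>\<^sub>e B \<and> \<not> B \<le>\<^sub>e A"

definition join :: "nat set \<Rightarrow> nat set \<Rightarrow> nat set" (infixl "\<oplus>" 65) where
  "X \<oplus> Y = {2 * n | n. n \<in> X} \<union> {2 * n + 1 | n. n \<in> Y}"

definition total_degree :: "nat set \<Rightarrow> bool" where
  "total_degree T \<longleftrightarrow> (\<exists>X. T \<equiv>\<^sub>e X \<oplus> (UNIV - X))"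

definition K_pair :: "nat set \<Rightarrow> nat set \<Rightarrow> nat set \<Rightarrow> bool" where
  "K_pair U A B \<longleftrightarrow> (\<exists>W. W \<le>\<^sub>e U
      \<and> {pair a b | a b. a \<in> A \<and> b \<in> B} \<subseteq> W
      \<and> {pair a b | a b. a \<notin> A \<and> b \<notin> B} \<inter> W = {})"

definition nontrivial_K_pair :: "nat set \<Rightarrow> nat set \<Rightarrow> nat set \<Rightarrow> bool" where
  "nontrivial_K_pair U A B \<longleftrightarrow> K_pair U A B \<and> \<not> A \<le>\<^sub>e U \<and> \<not> B \<le>\<^sub>e U"

end

theory Submission
  imports Defs
begin

(* Let {A, B} be a K_U-pair witnessed by W with B not e-reducible to U, and let
   X = Y (+) (UNIV - Y) be a total set with X = Gamma(A).  For each b consider the section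
   S_b = {a. <a, b> in W}.  If b is not in B then S_b is contained in A, so Gamma(S_b), being
   contained in X, never contains both 2y and 2y+1.  The set B' of those b for which Gamma(S_b)
   does contain such a clashing pair is e-reducible to W, hence to U, and lies inside B; so it
   misses some b in B.  For that b we have A within S_b, hence X within Gamma(S_b), and since X
   is maximal among clash-free sets, Gamma(S_b) = X.  Thus X <=e S_b <=e W <=e U: every total
   degree below A is below U.  Applied to both pairs this gives T0 =e T1, so {A, C} is also a
   K_T0-pair, and its witness and that of {A, B}, placed on odd and even second coordinates,
   combine into a witness for {A, B (+) C}. *)

section \<open>Primitive recursive functions\<close>

text \<open>\<^const>\<open>primrec_fn\<close> is intensional, so we work with functions that agree with one of
  its members on argument lists of the intended length.\<close>

definition prim_rec :: "nat \<Rightarrow> (nat list \<Rightarrow> nat) \<Rightarrow> bool" where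
  "prim_rec k f \<longleftrightarrow> (\<exists>g. primrec_fn k g \<and> (\<forall>xs. length xs = k \<longrightarrow> f xs = g xs))"

definition prim_rec_list :: "nat \<Rightarrow> nat \<Rightarrow> (nat list \<Rightarrow> nat list) \<Rightarrow> bool" where
  "prim_rec_list k m F \<longleftrightarrow>
     (\<forall>xs. length xs = k \<longrightarrow> length (F xs) = m) \<and> (\<forall>i<m. prim_rec k (\<lambda>xs. F xs ! i))"

lemma prim_rec_cong: "prim_rec k f \<Longrightarrow> (\<And>xs. length xs = k \<Longrightarrow> f xs = g xs) \<Longrightarrow> prim_rec k g"
  unfolding prim_rec_def by metis

lemma prim_rec_primrec_fn: "primrec_fn k f \<Longrightarrow> prim_rec k f"
  unfolding prim_rec_def by blast

lemma prim_rec_nth: "i < k \<Longrightarrow> prim_rec k (\<lambda>xs. xs ! i)"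
  by (simp add: prim_rec_primrec_fn pr_proj)

lemma prim_rec_comp:
  assumes f: "prim_rec m f" and F: "prim_rec_list k m F"
  shows "prim_rec k (\<lambda>xs. f (F xs))"
proof -
  obtain f' where f': "primrec_fn m f'" "\<And>ys. length ys = m \<Longrightarrow> f ys = f' ys"
    using f unfolding prim_rec_def by blast
  have "\<forall>i<m. \<exists>g. primrec_fn k g \<and> (\<forall>xs. length xs = k \<longrightarrow> F xs ! i = g xs)"
    using F unfolding prim_rec_list_def prim_rec_def by blast
  then obtain g where g: "\<And>i. i < m \<Longrightarrow> primrec_fn k (g i)"
    "\<And>i xs. i < m \<Longrightarrow> length xs = k \<Longrightarrow> F xs ! i = g i xs"
    by metis
  have "primrec_fn k (\<lambda>xs. f' (map (\<lambda>h. h xs) (map g [0..<m])))"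
    by (rule pr_comp) (use f' g in auto)
  moreover have "F xs = map (\<lambda>i. g i xs) [0..<m]" if "length xs = k" for xs
    using F that g(2) unfolding prim_rec_list_def by (auto intro: nth_equalityI)
  ultimately show ?thesis
    unfolding prim_rec_def using F f'(2) unfolding prim_rec_list_def
    by (intro exI[of _ "\<lambda>xs. f' (map (\<lambda>h. h xs) (map g [0..<m]))"]) (auto simp: comp_def)
qed

lemma prim_rec_rec:
  assumes f: "prim_rec k f" and g: "prim_rec (Suc (Suc k)) g"
    and F0: "\<And>ys. length ys = k \<Longrightarrow> F (0 # ys) = f ys"
    and FS: "\<And>n ys. length ys = k \<Longrightarrow> F (Suc n # ys) = g (n # F (n # ys) # ys)"
  shows "prim_rec (Suc k) F"
proof -
  obtain f' where f': "primrec_fn k f'" "\<And>ys. length ys = k \<Longrightarrow> f ys = f' ys"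
    using f unfolding prim_rec_def by blast
  obtain g' where g': "primrec_fn (Suc (Suc k)) g'" "\<And>zs. length zs = Suc (Suc k) \<Longrightarrow> g zs = g' zs"
    using g unfolding prim_rec_def by blast
  have "F (n # ys) = rec_nat (f' ys) (\<lambda>y r. g' (y # r # ys)) n" if "length ys = k" for n ys
    by (induction n) (use that F0 FS f' g' in auto)
  then show ?thesis
    unfolding prim_rec_def using pr_rec[OF f'(1) g'(1)]
    by (intro exI[of _ "\<lambda>xs. rec_nat (f' (tl xs)) (\<lambda>y r. g' (y # r # tl xs)) (hd xs)"])
       (auto simp: length_Suc_conv)
qed

lemma prim_rec_list_Nil: "prim_rec_list k 0 (\<lambda>_. [])"
  by (simp add: prim_rec_list_def)

lemma prim_rec_list_Cons:
  "prim_rec k f \<Longrightarrow> prim_rec_list k m F \<Longrightarrow> prim_rec_list k (Suc m) (\<lambda>xs. f xs # F xs)"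
  unfolding prim_rec_list_def by (auto simp: nth_Cons' less_Suc_eq_0_disj)

lemma prim_rec_list_id: "prim_rec_list k k (\<lambda>xs. xs)"
  by (simp add: prim_rec_list_def prim_rec_nth)

lemma prim_rec_list_tl: "prim_rec_list k m F \<Longrightarrow> prim_rec_list (Suc k) m (\<lambda>xs. F (tl xs))"
proof -
  assume F: "prim_rec_list k m F"
  have tl: "prim_rec_list (Suc k) k tl"
    unfolding prim_rec_list_def
    by (auto intro: prim_rec_cong[OF prim_rec_nth[of "Suc _" "Suc k"]] simp: nth_tl)
  have "prim_rec (Suc k) (\<lambda>xs. F (tl xs) ! i)" if "i < m" for i
    using prim_rec_comp[OF _ tl, of "\<lambda>ys. F ys ! i"] F that unfolding prim_rec_list_def by blast
  then show ?thesis using F unfolding prim_rec_list_def by simp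
qed

lemma prim_rec_hd: "prim_rec (Suc k) (\<lambda>xs. hd xs)"
  by (rule prim_rec_cong[OF prim_rec_nth[of 0]]) (auto simp: length_Suc_conv)

lemma prim_rec_tl: "prim_rec k f \<Longrightarrow> prim_rec (Suc k) (\<lambda>xs. f (tl xs))"
  by (rule prim_rec_comp[OF _ prim_rec_list_tl[OF prim_rec_list_id]])

lemma prim_rec_Suc: "prim_rec k f \<Longrightarrow> prim_rec k (\<lambda>xs. Suc (f xs))"
  using prim_rec_comp[OF prim_rec_primrec_fn[OF pr_succ[unfolded One_nat_def]]
      prim_rec_list_Cons[OF _ prim_rec_list_Nil]]
  by simp

lemma prim_rec_const: "prim_rec k (\<lambda>_. c)"
  by (induction c) (auto intro: prim_rec_primrec_fn pr_zero dest: prim_rec_Suc)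

lemmas prim_rec_list_intros = prim_rec_list_Nil prim_rec_list_Cons prim_rec_list_id prim_rec_list_tl

lemma prim_rec_binop:
  assumes h: "prim_rec (Suc (Suc 0)) (\<lambda>xs. h (hd xs) (hd (tl xs)))"
    and f: "prim_rec k f" and g: "prim_rec k g"
  shows "prim_rec k (\<lambda>xs. h (f xs) (g xs))"
  using prim_rec_comp[OF h prim_rec_list_Cons[OF f prim_rec_list_Cons[OF g prim_rec_list_Nil]]]
  by simp

lemma prim_rec_add:
  assumes "prim_rec k f" and "prim_rec k g"
  shows "prim_rec k (\<lambda>xs. f xs + g xs)"
proof (rule prim_rec_binop[of "(+)", OF _ assms])
  show "prim_rec (Suc (Suc 0)) (\<lambda>xs. hd xs + hd (tl xs))"
    by (rule prim_rec_rec[where f = hd and g = "\<lambda>zs. Suc (hd (tl zs))"];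
        (intro prim_rec_hd prim_rec_tl prim_rec_Suc)?; simp)
qed

lemma prim_rec_mult:
  assumes "prim_rec k f" and "prim_rec k g"
  shows "prim_rec k (\<lambda>xs. f xs * g xs)"
proof (rule prim_rec_binop[of "(*)", OF _ assms])
  show "prim_rec (Suc (Suc 0)) (\<lambda>xs. hd xs * hd (tl xs))"
    by (rule prim_rec_rec[where f = "\<lambda>_. 0" and g = "\<lambda>zs. hd (tl (tl zs)) + hd (tl zs)"];
        (intro prim_rec_add prim_rec_const prim_rec_hd prim_rec_tl)?; simp)
qed

lemma prim_rec_pred:
  assumes "prim_rec k f"
  shows "prim_rec k (\<lambda>xs. f xs - 1)"
proof -
  have "prim_rec (Suc 0) (\<lambda>xs. hd xs - 1)"
    by (rule prim_rec_rec[where f = "\<lambda>_. 0" and g = hd]; (intro prim_rec_const prim_rec_hd)?; simp)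
  from prim_rec_comp[OF this prim_rec_list_Cons[OF assms prim_rec_list_Nil]] show ?thesis by simp
qed

lemma prim_rec_diff:
  assumes "prim_rec k f" and "prim_rec k g"
  shows "prim_rec k (\<lambda>xs. f xs - g xs)"
proof (rule prim_rec_binop[of "\<lambda>a b. b - a", OF _ assms(2,1)])
  show "prim_rec (Suc (Suc 0)) (\<lambda>xs. hd (tl xs) - hd xs)"
    by (rule prim_rec_rec[where f = hd and g = "\<lambda>zs. hd (tl zs) - 1"];
        (intro prim_rec_pred prim_rec_hd prim_rec_tl)?; simp)
qed

lemma prim_rec_power:
  assumes "prim_rec k f" and "prim_rec k g"
  shows "prim_rec k (\<lambda>xs. f xs ^ g xs)"
proof (rule prim_rec_binop[of "\<lambda>a b. b ^ a", OF _ assms(2,1)])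
  show "prim_rec (Suc (Suc 0)) (\<lambda>xs. hd (tl xs) ^ hd xs)"
    by (rule prim_rec_rec[where f = "\<lambda>_. 1" and g = "\<lambda>zs. hd (tl (tl zs)) * hd (tl zs)"];
        (intro prim_rec_mult prim_rec_const prim_rec_hd prim_rec_tl)?; simp)
qed

lemma prim_rec_if_zero:
  assumes c: "prim_rec k c" and f: "prim_rec k f" and g: "prim_rec k g"
  shows "prim_rec k (\<lambda>xs. if c xs = 0 then f xs else g xs)"
proof -
  have "prim_rec (Suc (Suc (Suc 0))) (\<lambda>xs. if hd xs = 0 then hd (tl xs) else hd (tl (tl xs)))"
    by (rule prim_rec_rec[where f = hd and g = "\<lambda>zs. hd (tl (tl (tl zs)))"];
        (intro prim_rec_hd prim_rec_tl)?; simp)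
  from prim_rec_comp[OF this prim_rec_list_Cons[OF c prim_rec_list_Cons[OF f
        prim_rec_list_Cons[OF g prim_rec_list_Nil]]]]
  show ?thesis by (simp only: list.sel)
qed

lemma prim_rec_pair:
  assumes f: "prim_rec k f" and g: "prim_rec k g"
  shows "prim_rec k (\<lambda>xs. pair (f xs) (g xs))"
proof -
  have "prim_rec (Suc 0) (\<lambda>xs. triangle (hd xs))"
    by (rule prim_rec_rec[where f = "\<lambda>_. 0" and g = "\<lambda>zs. hd (tl zs) + Suc (hd zs)"];
        (intro prim_rec_add prim_rec_Suc prim_rec_const prim_rec_hd prim_rec_tl)?; simp)
  from prim_rec_comp[OF this prim_rec_list_Cons[OF prim_rec_add[OF f g] prim_rec_list_Nil]]
  have "prim_rec k (\<lambda>xs. triangle (f xs + g xs))" by simp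
  then show ?thesis unfolding pair_def prod_encode_def by (simp add: prim_rec_add f)
qed

lemmas prim_rec_intros =
  prim_rec_const prim_rec_hd prim_rec_tl prim_rec_Suc prim_rec_add prim_rec_mult prim_rec_diff
  prim_rec_power prim_rec_pair

section \<open>Primitive recursive and computably enumerable relations\<close>

definition prim_rec_rel :: "nat \<Rightarrow> (nat list \<Rightarrow> bool) \<Rightarrow> bool" where
  "prim_rec_rel k P \<longleftrightarrow> prim_rec k (\<lambda>xs. if P xs then 0 else 1)"

lemma prim_rec_rel_cong:
  "prim_rec_rel k P \<Longrightarrow> (\<And>xs. length xs = k \<Longrightarrow> P xs = Q xs) \<Longrightarrow> prim_rec_rel k Q"
  unfolding prim_rec_rel_def by (erule prim_rec_cong) simp

lemma prim_rec_if:
  assumes P: "prim_rec_rel k P" and f: "prim_rec k f" and g: "prim_rec k g"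
  shows "prim_rec k (\<lambda>xs. if P xs then f xs else g xs)"
  by (rule prim_rec_cong[OF prim_rec_if_zero[OF P[unfolded prim_rec_rel_def] f g]]) simp

lemma prim_rec_rel_eq:
  assumes f: "prim_rec k f" and g: "prim_rec k g"
  shows "prim_rec_rel k (\<lambda>xs. f xs = g xs)"
proof -
  have "prim_rec k (\<lambda>xs. if (f xs - g xs) + (g xs - f xs) = 0 then 0 else 1)"
    by (intro prim_rec_if_zero prim_rec_intros f g)
  then show ?thesis unfolding prim_rec_rel_def by (rule prim_rec_cong) auto
qed

lemma prim_rec_rel_not: "prim_rec_rel k P \<Longrightarrow> prim_rec_rel k (\<lambda>xs. \<not> P xs)"
  unfolding prim_rec_rel_def[of k "\<lambda>xs. \<not> P xs"]
  by (rule prim_rec_cong[OF prim_rec_if[of k P "\<lambda>_. 1" "\<lambda>_. 0"]]) (simp_all add: prim_rec_const)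

lemma prim_rec_rel_conj: "prim_rec_rel k P \<Longrightarrow> prim_rec_rel k Q \<Longrightarrow> prim_rec_rel k (\<lambda>xs. P xs \<and> Q xs)"
  unfolding prim_rec_rel_def[of k "\<lambda>xs. P xs \<and> Q xs"]
  by (rule prim_rec_cong[OF prim_rec_if[of k Q "\<lambda>xs. if P xs then 0 else 1" "\<lambda>_. 1"]])
     (simp_all add: prim_rec_const prim_rec_rel_def)

lemma prim_rec_rel_disj: "prim_rec_rel k P \<Longrightarrow> prim_rec_rel k Q \<Longrightarrow> prim_rec_rel k (\<lambda>xs. P xs \<or> Q xs)"
  unfolding prim_rec_rel_def[of k "\<lambda>xs. P xs \<or> Q xs"]
  by (rule prim_rec_cong[OF prim_rec_if[of k P "\<lambda>_. 0" "\<lambda>xs. if Q xs then 0 else 1"]])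
     (simp_all add: prim_rec_const prim_rec_rel_def)

lemma prim_rec_rel_imp:
  "prim_rec_rel k P \<Longrightarrow> prim_rec_rel k Q \<Longrightarrow> prim_rec_rel k (\<lambda>xs. P xs \<longrightarrow> Q xs)"
  using prim_rec_rel_disj[OF prim_rec_rel_not] by simp

lemma prim_rec_rel_comp: "prim_rec_rel m R \<Longrightarrow> prim_rec_list k m F \<Longrightarrow> prim_rec_rel k (\<lambda>xs. R (F xs))"
  unfolding prim_rec_rel_def by (drule prim_rec_comp) auto

text \<open>Quantifier rules push the bound variable onto the front of the argument list, so the
  variables of a formula become \<^term>\<open>hd xs\<close>, \<^term>\<open>hd (tl xs)\<close>, \<open>\<dots>\<close> and the rule
  collections \<open>*_intros\<close> decompose a formula syntactically by \<open>intro\<close>.\<close>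

lemma prim_rec_rel_ex_less:
  assumes P: "prim_rec_rel (Suc k) (\<lambda>ys. P (hd ys) (tl ys))" and t: "prim_rec k t"
  shows "prim_rec_rel k (\<lambda>xs. \<exists>y<t xs. P y xs)"
proof -
  have "prim_rec_list (Suc (Suc k)) (Suc k) (\<lambda>zs. hd zs # tl (tl zs))"
    by (intro prim_rec_list_intros prim_rec_intros)
  from prim_rec_rel_comp[OF P this]
  have "prim_rec_rel (Suc (Suc k)) (\<lambda>zs. hd (tl zs) = 0 \<or> P (hd zs) (tl (tl zs)))"
    by (intro prim_rec_rel_disj prim_rec_rel_eq prim_rec_intros) simp
  then have "prim_rec_rel (Suc k) (\<lambda>zs. \<exists>y<hd zs. P y (tl zs))"
    unfolding prim_rec_rel_def
    by (rule prim_rec_rec[OF prim_rec_const[of k 1]]) (auto simp: less_Suc_eq)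
  from prim_rec_rel_comp[OF this prim_rec_list_Cons[OF t prim_rec_list_id]] show ?thesis
    by simp
qed

lemma prim_rec_rel_all_less:
  assumes "prim_rec_rel (Suc k) (\<lambda>ys. P (hd ys) (tl ys))" and "prim_rec k t"
  shows "prim_rec_rel k (\<lambda>xs. \<forall>y<t xs. P y xs)"
  using prim_rec_rel_not[OF prim_rec_rel_ex_less[OF prim_rec_rel_not[OF assms(1)] assms(2)]]
  by simp

lemma set_decode_power2: "set_decode (2 ^ x) = {x}"
  using set_encode_inverse[of "{x}"] by simp

lemma set_decode_less: "x \<in> set_decode d \<Longrightarrow> x < d"
proof -
  assume "x \<in> set_decode d"
  then have "2 ^ x \<le> d" by (metis set_decode_power2 empty_subsetI insert_subset subset_decode_imp_le)
  then show "x < d" using less_exp[of x] by linarith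
qed

lemma mem_set_decode_iff: "x \<in> set_decode c \<longleftrightarrow> (\<exists>q<Suc c. \<exists>r<2 ^ x. c = (2 * q + 1) * 2 ^ x + r)"
proof
  assume "x \<in> set_decode c"
  then have "c div 2 ^ x = 2 * (c div 2 ^ x div 2) + 1"
    by (simp add: set_decode_def odd_two_times_div_two_succ)
  moreover have "c div 2 ^ x div 2 < Suc c"
    by (meson div_le_dividend le_imp_less_Suc order_trans)
  moreover have "c = c div 2 ^ x * 2 ^ x + c mod 2 ^ x" by (rule div_mult_mod_eq[symmetric])
  moreover have "c mod 2 ^ x < 2 ^ x" by simp
  ultimately show "\<exists>q<Suc c. \<exists>r<2 ^ x. c = (2 * q + 1) * 2 ^ x + r" by metis
next
  assume "\<exists>q<Suc c. \<exists>r<2 ^ x. c = (2 * q + 1) * 2 ^ x + r"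
  then obtain q r where "r < 2 ^ x" "c = (2 * q + 1) * 2 ^ x + r" by blast
  then have "c div 2 ^ x = 2 * q + 1" by (simp add: div_add1_eq div_less)
  then show "x \<in> set_decode c" by (simp add: set_decode_def)
qed

lemma prim_rec_rel_mem_set_decode:
  assumes x: "prim_rec k x" and c: "prim_rec k c"
  shows "prim_rec_rel k (\<lambda>xs. x xs \<in> set_decode (c xs))"
proof -
  have "prim_rec_rel k (\<lambda>xs. \<exists>q<Suc (c xs). \<exists>r<2 ^ x xs. c xs = (2 * q + 1) * 2 ^ x xs + r)"
    by (intro prim_rec_rel_ex_less prim_rec_rel_eq prim_rec_intros x c)
  then show ?thesis by (rule prim_rec_rel_cong) (simp add: mem_set_decode_iff)
qed

lemma prim_rec_rel_ball_set_decode: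
  assumes P: "prim_rec_rel (Suc k) (\<lambda>ys. P (hd ys) (tl ys))" and d: "prim_rec k d"
  shows "prim_rec_rel k (\<lambda>xs. \<forall>y\<in>set_decode (d xs). P y xs)"
proof -
  have "prim_rec_rel k (\<lambda>xs. \<forall>y<d xs. y \<in> set_decode (d xs) \<longrightarrow> P y xs)"
    by (intro prim_rec_rel_all_less prim_rec_rel_imp prim_rec_rel_mem_set_decode prim_rec_intros P d)
  then show ?thesis by (rule prim_rec_rel_cong) (auto dest: set_decode_less)
qed

lemmas prim_rec_rel_intros =
  prim_rec_rel_conj prim_rec_rel_disj prim_rec_rel_not prim_rec_rel_imp prim_rec_rel_ex_less
  prim_rec_rel_all_less prim_rec_rel_ball_set_decode prim_rec_rel_eq prim_rec_rel_mem_set_decode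

lemma prim_rec_rel_subset_set_decode:
  "prim_rec k c \<Longrightarrow> prim_rec k d \<Longrightarrow> prim_rec_rel k (\<lambda>xs. set_decode (c xs) \<subseteq> set_decode (d xs))"
  unfolding subset_eq by (intro prim_rec_rel_intros prim_rec_intros)

definition ce_rel :: "nat \<Rightarrow> (nat list \<Rightarrow> bool) \<Rightarrow> bool" where
  "ce_rel k P \<longleftrightarrow> (\<exists>R. prim_rec_rel (Suc k) R \<and> (\<forall>xs. length xs = k \<longrightarrow> P xs = (\<exists>m. R (m # xs))))"

lemma ce_rel_cong: "ce_rel k P \<Longrightarrow> (\<And>xs. length xs = k \<Longrightarrow> P xs = Q xs) \<Longrightarrow> ce_rel k Q"
  unfolding ce_rel_def by metis

lemma ce_relI:
  "prim_rec_rel (Suc k) R \<Longrightarrow> (\<And>xs. length xs = k \<Longrightarrow> P xs \<longleftrightarrow> (\<exists>m. R (m # xs))) \<Longrightarrow> ce_rel k P"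
  unfolding ce_rel_def by blast

lemma ce_rel_prim_rec_rel: "prim_rec_rel k P \<Longrightarrow> ce_rel k P"
  by (rule ce_relI[OF prim_rec_rel_comp[OF _ prim_rec_list_tl[OF prim_rec_list_id]]]) auto

lemma ce_rel_disj:
  assumes "ce_rel k P" "ce_rel k Q"
  shows "ce_rel k (\<lambda>xs. P xs \<or> Q xs)"
proof -
  obtain R where R: "prim_rec_rel (Suc k) R" "\<And>xs. length xs = k \<Longrightarrow> P xs \<longleftrightarrow> (\<exists>m. R (m # xs))"
    using assms(1) unfolding ce_rel_def by auto
  obtain S where S: "prim_rec_rel (Suc k) S" "\<And>xs. length xs = k \<Longrightarrow> Q xs \<longleftrightarrow> (\<exists>m. S (m # xs))"
    using assms(2) unfolding ce_rel_def by auto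
  show ?thesis by (rule ce_relI[OF prim_rec_rel_disj[OF R(1) S(1)]]) (auto simp: R(2) S(2))
qed

lemma ce_rel_conj:
  assumes "ce_rel k P" "ce_rel k Q"
  shows "ce_rel k (\<lambda>xs. P xs \<and> Q xs)"
proof -
  obtain R where R: "prim_rec_rel (Suc k) R" "\<And>xs. length xs = k \<Longrightarrow> P xs \<longleftrightarrow> (\<exists>m. R (m # xs))"
    using assms(1) unfolding ce_rel_def by auto
  obtain S where S: "prim_rec_rel (Suc k) S" "\<And>xs. length xs = k \<Longrightarrow> Q xs \<longleftrightarrow> (\<exists>m. S (m # xs))"
    using assms(2) unfolding ce_rel_def by auto
  have conj_iff: "P xs \<and> Q xs \<longleftrightarrow> (\<exists>m. (\<exists>a<Suc m. R (a # xs)) \<and> (\<exists>b<Suc m. S (b # xs)))"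
    if len: "length xs = k" for xs
  proof
    assume "P xs \<and> Q xs"
    then obtain a b where "R (a # xs)" "S (b # xs)" using R(2) S(2) len by blast
    moreover have "a < Suc (max a b)" "b < Suc (max a b)" by simp_all
    ultimately show "\<exists>m. (\<exists>a<Suc m. R (a # xs)) \<and> (\<exists>b<Suc m. S (b # xs))" by blast
  qed (use R(2) S(2) len in blast)
  have "prim_rec_rel (Suc k) (\<lambda>ys. (\<exists>a<Suc (hd ys). R (a # tl ys)) \<and> (\<exists>b<Suc (hd ys). S (b # tl ys)))"
    by (intro prim_rec_rel_intros prim_rec_rel_comp[OF R(1)] prim_rec_rel_comp[OF S(1)]
        prim_rec_list_intros prim_rec_intros)
  then show ?thesis by (rule ce_relI) (simp add: conj_iff)
qed

lemma ce_rel_ex: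
  assumes "ce_rel (Suc k) (\<lambda>ys. P (hd ys) (tl ys))"
  shows "ce_rel k (\<lambda>xs. \<exists>y. P y xs)"
proof -
  obtain R where R: "prim_rec_rel (Suc (Suc k)) R"
    "\<And>ys. length ys = Suc k \<Longrightarrow> P (hd ys) (tl ys) \<longleftrightarrow> (\<exists>m. R (m # ys))"
    using assms unfolding ce_rel_def by auto
  have P: "P y xs \<longleftrightarrow> (\<exists>m. R (m # y # xs))" if "length xs = k" for y xs
    using R(2)[of "y # xs"] that by simp
  have ex_iff: "(\<exists>y. P y xs) \<longleftrightarrow> (\<exists>m. \<exists>y<Suc m. \<exists>a<Suc m. R (a # y # xs))"
    if len: "length xs = k" for xs
  proof
    assume "\<exists>y. P y xs"
    then obtain y a where "R (a # y # xs)" using P len by blast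
    moreover have "y < Suc (max a y)" "a < Suc (max a y)" by simp_all
    ultimately show "\<exists>m. \<exists>y<Suc m. \<exists>a<Suc m. R (a # y # xs)" by blast
  qed (use P len in blast)
  have "prim_rec_rel (Suc k) (\<lambda>zs. \<exists>y<Suc (hd zs). \<exists>a<Suc (hd zs). R (a # y # tl zs))"
    by (intro prim_rec_rel_intros prim_rec_rel_comp[OF R(1)] prim_rec_list_intros prim_rec_intros)
  then show ?thesis by (rule ce_relI) (simp add: ex_iff)
qed

lemma bounded_choice_nat: "\<forall>y<(n::nat). \<exists>a::nat. Q y a \<Longrightarrow> \<exists>M. \<forall>y<n. \<exists>a<M. Q y a"
proof -
  assume "\<forall>y<n. \<exists>a. Q y a"
  then obtain f where f: "\<And>y. y < n \<Longrightarrow> Q y (f y)" by metis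
  have "f y < Suc (Max (f ` {..<n}))" if "y < n" for y
    using that by (simp add: le_imp_less_Suc)
  then show ?thesis using f by blast
qed

lemma ce_rel_all_less:
  assumes P: "ce_rel (Suc k) (\<lambda>ys. P (hd ys) (tl ys))" and t: "prim_rec k t"
  shows "ce_rel k (\<lambda>xs. \<forall>y<t xs. P y xs)"
proof -
  obtain R where R: "prim_rec_rel (Suc (Suc k)) R"
    "\<And>ys. length ys = Suc k \<Longrightarrow> P (hd ys) (tl ys) \<longleftrightarrow> (\<exists>m. R (m # ys))"
    using P unfolding ce_rel_def by auto
  have P: "P y xs \<longleftrightarrow> (\<exists>m. R (m # y # xs))" if "length xs = k" for y xs
    using R(2)[of "y # xs"] that by simp
  have "prim_rec_rel (Suc k) (\<lambda>zs. \<forall>y<t (tl zs). \<exists>a<hd zs. R (a # y # tl zs))"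
    by (intro prim_rec_rel_intros prim_rec_rel_comp[OF R(1)] prim_rec_list_intros prim_rec_intros t)
  then show ?thesis
    by (rule ce_relI) (auto simp: P intro!: bounded_choice_nat)
qed

lemma ce_rel_imp: "prim_rec_rel k P \<Longrightarrow> ce_rel k Q \<Longrightarrow> ce_rel k (\<lambda>xs. P xs \<longrightarrow> Q xs)"
  using ce_rel_disj[OF ce_rel_prim_rec_rel[OF prim_rec_rel_not]] by simp

lemma ce_rel_ball_set_decode:
  assumes P: "ce_rel (Suc k) (\<lambda>ys. P (hd ys) (tl ys))" and d: "prim_rec k d"
  shows "ce_rel k (\<lambda>xs. \<forall>y\<in>set_decode (d xs). P y xs)"
proof -
  have "ce_rel k (\<lambda>xs. \<forall>y<d xs. y \<in> set_decode (d xs) \<longrightarrow> P y xs)"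
    by (intro ce_rel_all_less ce_rel_imp prim_rec_rel_mem_set_decode prim_rec_intros P d)
  then show ?thesis by (rule ce_rel_cong) (auto dest: set_decode_less)
qed

lemma ce_rel_mem:
  assumes G: "ce G" and t: "prim_rec k t"
  shows "ce_rel k (\<lambda>xs. t xs \<in> G)"
proof -
  obtain f where f: "primrec_fn 2 f" and G_eq: "G = {n. \<exists>m. f [n, m] = 0}"
    using G unfolding ce_def by blast
  have f': "prim_rec (Suc (Suc 0)) f" using prim_rec_primrec_fn[OF f] by (simp add: numeral_2_eq_2)
  have "prim_rec_rel (Suc k) (\<lambda>ys. f [t (tl ys), hd ys] = 0)"
    by (intro prim_rec_rel_eq prim_rec_comp[OF f'] prim_rec_list_intros prim_rec_intros t)
  then show ?thesis by (rule ce_relI) (simp add: G_eq)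
qed

lemma ce_CollectI:
  assumes "ce_rel (Suc 0) (\<lambda>xs. P (hd xs))"
  shows "ce {n. P n}"
proof -
  obtain R where R: "prim_rec_rel (Suc (Suc 0)) R"
    and P: "\<forall>xs. length xs = Suc 0 \<longrightarrow> P (hd xs) = (\<exists>m. R (m # xs))"
    using assms unfolding ce_rel_def by blast
  have P_iff: "P n \<longleftrightarrow> (\<exists>m. R [m, n])" for n
    using P[rule_format, of "[n]"] by simp
  have "prim_rec (Suc (Suc 0)) (\<lambda>xs. if R [hd (tl xs), hd xs] then 0 else 1)"
    by (intro prim_rec_comp[OF R[unfolded prim_rec_rel_def]] prim_rec_list_intros prim_rec_intros)
  then obtain g where "primrec_fn 2 g" "\<And>xs. length xs = 2 \<Longrightarrow> g xs = (if R [hd (tl xs), hd xs] then 0 else 1)"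
    unfolding prim_rec_def numeral_2_eq_2 by metis
  then show ?thesis unfolding ce_def using P_iff by (intro exI[of _ g]) auto
qed

lemmas ce_rel_intros =
  ce_rel_conj ce_rel_disj ce_rel_ex ce_rel_ball_set_decode ce_rel_imp ce_rel_mem ce_rel_prim_rec_rel

section \<open>Enumeration reducibility\<close>

lemma mem_enum_op_iff: "n \<in> enum_op G X \<longleftrightarrow> (\<exists>d. pair n d \<in> G \<and> set_decode d \<subseteq> X)"
proof
  assume "n \<in> enum_op G X"
  then obtain D where "finite D" "D \<subseteq> X" "pair n (fin_code D) \<in> G" unfolding enum_op_def by blast
  then show "\<exists>d. pair n d \<in> G \<and> set_decode d \<subseteq> X"
    by (intro exI[of _ "fin_code D"]) (simp add: fin_code_def flip: set_encode_def)
next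
  assume "\<exists>d. pair n d \<in> G \<and> set_decode d \<subseteq> X"
  then obtain d where "pair n d \<in> G" "set_decode d \<subseteq> X" by blast
  then show "n \<in> enum_op G X" unfolding enum_op_def
    by (intro CollectI exI[of _ "set_decode d"]) (simp add: fin_code_def flip: set_encode_def)
qed

lemma enum_op_mono: "X \<subseteq> Y \<Longrightarrow> enum_op G X \<subseteq> enum_op G Y"
  unfolding enum_op_def by blast

lemma pair_eq_iff [simp]: "pair a b = pair c d \<longleftrightarrow> a = c \<and> b = d"
  by (simp add: pair_def)

lemma e_le_trans:
  assumes "A \<le>\<^sub>e B" and "B \<le>\<^sub>e C"
  shows "A \<le>\<^sub>e C"
proof -
  obtain G1 where G1: "ce G1" "A = enum_op G1 B" using assms(1) unfolding e_le_def by blast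
  obtain G2 where G2: "ce G2" "B = enum_op G2 C" using assms(2) unfolding e_le_def by blast
  define D where "D = {z. \<exists>n e d. z = pair n e \<and> pair n d \<in> G1 \<and>
    (\<forall>x\<in>set_decode d. \<exists>c. pair x c \<in> G2 \<and> set_decode c \<subseteq> set_decode e)}"
  have "ce D" unfolding D_def
    by (intro ce_CollectI ce_rel_intros prim_rec_rel_intros prim_rec_rel_subset_set_decode
        prim_rec_intros G1(1) G2(1))
  moreover have "enum_op D C = enum_op G1 (enum_op G2 C)"
  proof (intro set_eqI iffI)
    fix n assume "n \<in> enum_op D C"
    then obtain d e where "pair n d \<in> G1" "set_decode e \<subseteq> C"
      and "\<forall>x\<in>set_decode d. \<exists>c. pair x c \<in> G2 \<and> set_decode c \<subseteq> set_decode e"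
      unfolding mem_enum_op_iff D_def by auto
    then have "set_decode d \<subseteq> enum_op G2 C" unfolding subset_iff mem_enum_op_iff by blast
    then show "n \<in> enum_op G1 (enum_op G2 C)" using \<open>pair n d \<in> G1\<close> unfolding mem_enum_op_iff by blast
  next
    fix n assume "n \<in> enum_op G1 (enum_op G2 C)"
    then obtain d where d: "pair n d \<in> G1" "\<forall>x\<in>set_decode d. \<exists>c. pair x c \<in> G2 \<and> set_decode c \<subseteq> C"
      unfolding mem_enum_op_iff subset_iff by blast
    then obtain c where c: "\<forall>x\<in>set_decode d. pair x (c x) \<in> G2 \<and> set_decode (c x) \<subseteq> C"
      by metis
    define e where "e = set_encode (\<Union>x\<in>set_decode d. set_decode (c x))"
    have "set_decode e = (\<Union>x\<in>set_decode d. set_decode (c x))" unfolding e_def by simp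
    then have "pair n e \<in> D" "set_decode e \<subseteq> C" unfolding D_def using d(1) c by blast+
    then show "n \<in> enum_op D C" unfolding mem_enum_op_iff by blast
  qed
  ultimately show ?thesis using G1(2) G2(2) unfolding e_le_def by auto
qed

lemma e_le_preimage:
  assumes f: "prim_rec (Suc 0) (\<lambda>xs. f (hd xs))"
  shows "{n. f n \<in> S} \<le>\<^sub>e S"
proof -
  define D where "D = {z. \<exists>n. z = pair n (2 ^ f n)}"
  have "prim_rec (Suc (Suc 0)) (\<lambda>xs. f (hd xs))"
    using prim_rec_comp[OF f prim_rec_list_Cons[OF prim_rec_hd prim_rec_list_Nil]] by simp
  then have "ce D" unfolding D_def
    by (intro ce_CollectI ce_rel_intros prim_rec_rel_intros prim_rec_intros)
  moreover have "{n. f n \<in> S} = enum_op D S"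
    by (auto simp: mem_enum_op_iff D_def set_decode_power2)
  ultimately show ?thesis unfolding e_le_def by blast
qed

lemma e_le_tagged_union:
  assumes "W0 \<le>\<^sub>e U" and "W1 \<le>\<^sub>e U"
  shows "{pair a (2 * b) | a b. pair a b \<in> W0} \<union> {pair a (2 * b + 1) | a b. pair a b \<in> W1} \<le>\<^sub>e U"
proof -
  obtain G0 where G0: "ce G0" "W0 = enum_op G0 U" using assms(1) unfolding e_le_def by blast
  obtain G1 where G1: "ce G1" "W1 = enum_op G1 U" using assms(2) unfolding e_le_def by blast
  define D where "D = {z. \<exists>a b e. z = pair (pair a (2 * b)) e \<and> pair (pair a b) e \<in> G0 \<or>
    z = pair (pair a (2 * b + 1)) e \<and> pair (pair a b) e \<in> G1}"
  have "ce D" unfolding D_def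
    by (intro ce_CollectI ce_rel_intros prim_rec_rel_intros prim_rec_intros G0(1) G1(1))
  moreover have "{pair a (2 * b) | a b. pair a b \<in> W0} \<union> {pair a (2 * b + 1) | a b. pair a b \<in> W1}
      = enum_op D U" (is "?W = _")
  proof (intro set_eqI iffI)
    fix z assume "z \<in> ?W"
    then show "z \<in> enum_op D U" unfolding G0(2) G1(2) mem_enum_op_iff D_def by blast
  next
    fix z assume "z \<in> enum_op D U"
    then obtain d where "pair z d \<in> D" "set_decode d \<subseteq> U" unfolding mem_enum_op_iff by blast
    then show "z \<in> ?W" unfolding G0(2) G1(2) mem_enum_op_iff D_def by auto
  qed
  ultimately show ?thesis unfolding e_le_def by blast
qed

lemma e_le_clashing_sections:
  assumes G: "ce G"
  shows "{b. \<exists>y. {2 * y, 2 * y + 1} \<subseteq> enum_op G {a. pair a b \<in> W}} \<le>\<^sub>e W" (is "?B \<le>\<^sub>e W")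
proof -
  define D where "D = {z. \<exists>b e y d1 d2. z = pair b e \<and> pair (2 * y) d1 \<in> G \<and> pair (2 * y + 1) d2 \<in> G \<and>
    (\<forall>x\<in>set_decode d1. pair x b \<in> set_decode e) \<and> (\<forall>x\<in>set_decode d2. pair x b \<in> set_decode e)}"
  have "ce D" unfolding D_def
    by (intro ce_CollectI ce_rel_intros prim_rec_rel_intros prim_rec_intros G)
  moreover have "?B = enum_op D W"
  proof (intro set_eqI iffI)
    fix b assume "b \<in> ?B"
    then obtain y where "2 * y \<in> enum_op G {a. pair a b \<in> W}" "2 * y + 1 \<in> enum_op G {a. pair a b \<in> W}"
      by auto
    then obtain d1 d2 where d: "pair (2 * y) d1 \<in> G" "pair (2 * y + 1) d2 \<in> G"
      "\<forall>x\<in>set_decode d1 \<union> set_decode d2. pair x b \<in> W"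
      unfolding mem_enum_op_iff by blast
    define E where "E = (\<lambda>x. pair x b) ` (set_decode d1 \<union> set_decode d2)"
    have E: "set_decode (set_encode E) = E" unfolding E_def by simp
    then have "pair b (set_encode E) \<in> D" unfolding D_def E_def using d(1,2) by blast
    moreover have "E \<subseteq> W" unfolding E_def using d(3) by blast
    ultimately show "b \<in> enum_op D W" unfolding mem_enum_op_iff using E by metis
  next
    fix b assume "b \<in> enum_op D W"
    then obtain e where "pair b e \<in> D" "set_decode e \<subseteq> W" unfolding mem_enum_op_iff by blast
    then obtain y d1 d2 where "pair (2 * y) d1 \<in> G" "pair (2 * y + 1) d2 \<in> G"
      "set_decode d1 \<subseteq> {a. pair a b \<in> W}" "set_decode d2 \<subseteq> {a. pair a b \<in> W}"
      unfolding D_def mem_Collect_eq pair_eq_iff by blast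
    then have "2 * y \<in> enum_op G {a. pair a b \<in> W}" "2 * y + 1 \<in> enum_op G {a. pair a b \<in> W}"
      unfolding mem_enum_op_iff by blast+
    then show "b \<in> ?B" by blast
  qed
  ultimately show ?thesis unfolding e_le_def by blast
qed

section \<open>K-pairs and total degrees\<close>

lemma join_even [simp]: "2 * n \<in> X \<oplus> Y \<longleftrightarrow> n \<in> X"
  unfolding join_def by auto presburger

lemma join_odd [simp]: "Suc (2 * n) \<in> X \<oplus> Y \<longleftrightarrow> n \<in> Y"
  unfolding join_def by auto presburger

lemma join_compl_maximal:
  assumes sub: "Y \<oplus> (UNIV - Y) \<subseteq> Z" and no_clash: "\<forall>y. \<not> {2 * y, 2 * y + 1} \<subseteq> Z"
  shows "Z = Y \<oplus> (UNIV - Y)"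
proof
  have "2 * y \<in> Z" if "y \<in> Y" for y using sub that by auto
  moreover have "Suc (2 * y) \<in> Z" if "y \<notin> Y" for y using sub that by auto
  ultimately have Z: "2 * y \<in> Z \<longleftrightarrow> y \<in> Y" "Suc (2 * y) \<in> Z \<longleftrightarrow> y \<notin> Y" for y
    using no_clash by auto
  show "Z \<subseteq> Y \<oplus> (UNIV - Y)"
  proof
    fix z assume "z \<in> Z"
    moreover have "\<exists>y. z = 2 * y \<or> z = Suc (2 * y)" by presburger
    ultimately show "z \<in> Y \<oplus> (UNIV - Y)" using Z by auto
  qed
qed (rule sub)

lemma e_le_join_left: "B \<le>\<^sub>e B \<oplus> C"
proof -
  have "{n. 2 * n \<in> B \<oplus> C} \<le>\<^sub>e B \<oplus> C" by (rule e_le_preimage) (intro prim_rec_intros)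
  then show ?thesis by (simp only: join_even Collect_mem_eq)
qed

lemma K_pair_iff:
  "K_pair U A B \<longleftrightarrow>
    (\<exists>W. W \<le>\<^sub>e U \<and> (\<forall>a\<in>A. \<forall>b\<in>B. pair a b \<in> W) \<and> (\<forall>a b. a \<notin> A \<longrightarrow> b \<notin> B \<longrightarrow> pair a b \<notin> W))"
proof -
  have "{pair a b | a b. a \<in> A \<and> b \<in> B} \<subseteq> W \<longleftrightarrow> (\<forall>a\<in>A. \<forall>b\<in>B. pair a b \<in> W)"
    and "{pair a b | a b. a \<notin> A \<and> b \<notin> B} \<inter> W = {} \<longleftrightarrow> (\<forall>a b. a \<notin> A \<longrightarrow> b \<notin> B \<longrightarrow> pair a b \<notin> W)"
    for W by blast+
  then show ?thesis unfolding K_pair_def by simp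
qed
lemma K_pair_base_mono: "K_pair U A B \<Longrightarrow> U \<le>\<^sub>e V \<Longrightarrow> K_pair V A B"
  unfolding K_pair_iff by (blast intro: e_le_trans)

lemma K_pair_join:
  assumes "K_pair U A B" and "K_pair U A C"
  shows "K_pair U A (B \<oplus> C)"
proof -
  obtain W0 where W0: "W0 \<le>\<^sub>e U" "\<forall>a\<in>A. \<forall>b\<in>B. pair a b \<in> W0" "\<forall>a b. a \<notin> A \<longrightarrow> b \<notin> B \<longrightarrow> pair a b \<notin> W0"
    using assms(1) unfolding K_pair_iff by blast
  obtain W1 where W1: "W1 \<le>\<^sub>e U" "\<forall>a\<in>A. \<forall>c\<in>C. pair a c \<in> W1" "\<forall>a c. a \<notin> A \<longrightarrow> c \<notin> C \<longrightarrow> pair a c \<notin> W1"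
    using assms(2) unfolding K_pair_iff by blast
  let ?W = "{pair a (2 * b) | a b. pair a b \<in> W0} \<union> {pair a (2 * b + 1) | a b. pair a b \<in> W1}"
  have "?W \<le>\<^sub>e U" using e_le_tagged_union[OF W0(1) W1(1)] .
  moreover have "pair a z \<in> ?W" if "a \<in> A" "z \<in> B \<oplus> C" for a z
    using that W0(2) W1(2) unfolding join_def by auto
  moreover have "pair a z \<notin> ?W" if "a \<notin> A" "z \<notin> B \<oplus> C" for a z
  proof
    assume "pair a z \<in> ?W"
    then obtain b where "z = 2 * b \<and> pair a b \<in> W0 \<or> z = Suc (2 * b) \<and> pair a b \<in> W1" by auto
    then show False using that W0(3) W1(3) by auto
  qed
  ultimately show ?thesis unfolding K_pair_iff by blast
qed

lemma K_pair_join_compl_e_le_base: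
  assumes K: "K_pair U A B" and B: "\<not> B \<le>\<^sub>e U" and XA: "Y \<oplus> (UNIV - Y) \<le>\<^sub>e A"
  shows "Y \<oplus> (UNIV - Y) \<le>\<^sub>e U"
proof -
  let ?X = "Y \<oplus> (UNIV - Y)"
  obtain G where G: "ce G" "?X = enum_op G A" using XA unfolding e_le_def by blast
  obtain W where W: "W \<le>\<^sub>e U" "\<forall>a\<in>A. \<forall>b\<in>B. pair a b \<in> W" "\<forall>a b. a \<notin> A \<longrightarrow> b \<notin> B \<longrightarrow> pair a b \<notin> W"
    using K unfolding K_pair_iff by blast
  define S where "S b = {a. pair a b \<in> W}" for b
  define B' where "B' = {b. \<exists>y. {2 * y, 2 * y + 1} \<subseteq> enum_op G (S b)}"
  have "B' \<le>\<^sub>e U"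
    using e_le_trans[OF e_le_clashing_sections[OF G(1)] W(1)] unfolding B'_def S_def .
  have "B' \<subseteq> B"
  proof
    fix b assume "b \<in> B'"
    show "b \<in> B"
    proof (rule ccontr)
      assume "b \<notin> B"
      then have "enum_op G (S b) \<subseteq> ?X" unfolding G(2) S_def using W(3) by (intro enum_op_mono) blast
      moreover obtain y where "{2 * y, 2 * y + 1} \<subseteq> enum_op G (S b)"
        using \<open>b \<in> B'\<close> unfolding B'_def by blast
      ultimately have "{2 * y, 2 * y + 1} \<subseteq> ?X" by (rule subset_trans[rotated])
      then show False by simp
    qed
  qed
  moreover have "B' \<noteq> B" using B \<open>B' \<le>\<^sub>e U\<close> by auto
  ultimately obtain b where "b \<in> B" "b \<notin> B'" by blast
  then have "A \<subseteq> S b" using W(2) unfolding S_def by blast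
  then have "?X \<subseteq> enum_op G (S b)" unfolding G(2) by (rule enum_op_mono)
  moreover have "\<forall>y. \<not> {2 * y, 2 * y + 1} \<subseteq> enum_op G (S b)"
    using \<open>b \<notin> B'\<close> unfolding B'_def by blast
  ultimately have "enum_op G (S b) = ?X" by (rule join_compl_maximal)
  then have "?X \<le>\<^sub>e S b" using G(1) unfolding e_le_def by metis
  moreover have "S b \<le>\<^sub>e W"
    unfolding S_def by (rule e_le_preimage) (intro prim_rec_intros)
  ultimately show ?thesis using e_le_trans W(1) by metis
qed

lemma K_pair_total_degree_e_le_base:
  assumes K: "K_pair U A B" and B: "\<not> B \<le>\<^sub>e U" and T: "total_degree T" and TA: "T \<le>\<^sub>e A"
  shows "T \<le>\<^sub>e U"
proof -
  obtain Y where Y: "T \<le>\<^sub>e Y \<oplus> (UNIV - Y)" "Y \<oplus> (UNIV - Y) \<le>\<^sub>e T"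
    using T unfolding total_degree_def e_equiv_def by blast
  have "Y \<oplus> (UNIV - Y) \<le>\<^sub>e U"
    using K_pair_join_compl_e_le_base[OF K B e_le_trans[OF Y(2) TA]] .
  then show ?thesis using e_le_trans[OF Y(1)] by blast
qed

theorem lemma6p3:
  fixes T0 T1 A B C :: "nat set"
  assumes "total_degree T0" and "total_degree T1"
    and "T0 <\<^sub>e A" and "T1 <\<^sub>e A"
    and "nontrivial_K_pair T0 A B" and "nontrivial_K_pair T1 A C"
  shows "T0 \<equiv>\<^sub>e T1 \<and> nontrivial_K_pair T0 A (B \<oplus> C)"
proof -
  have T0A: "T0 \<le>\<^sub>e A" and T1A: "T1 \<le>\<^sub>e A" using assms(3,4) unfolding e_less_def by blast+
  have KB: "K_pair T0 A B" and A: "\<not> A \<le>\<^sub>e T0" and B: "\<not> B \<le>\<^sub>e T0"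
    using assms(5) unfolding nontrivial_K_pair_def by blast+
  have KC: "K_pair T1 A C" and C: "\<not> C \<le>\<^sub>e T1"
    using assms(6) unfolding nontrivial_K_pair_def by blast+
  have T10: "T1 \<le>\<^sub>e T0" by (rule K_pair_total_degree_e_le_base[OF KB B assms(2) T1A])
  moreover have "T0 \<le>\<^sub>e T1" by (rule K_pair_total_degree_e_le_base[OF KC C assms(1) T0A])
  moreover have "K_pair T0 A (B \<oplus> C)" by (rule K_pair_join[OF KB K_pair_base_mono[OF KC T10]])
  moreover have "\<not> B \<oplus> C \<le>\<^sub>e T0" using B e_le_trans[OF e_le_join_left] by blast
  ultimately show ?thesis using A unfolding e_equiv_def nontrivial_K_pair_def by blast
qed

end
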